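(* Every nondeterministic constraint logic (NCL) instance that has at least one solution has more than one solution.
   Context: An NCL instance is a 3-regular undirected graph whose edges are colored blue or red, with each vertex incident to either exactly one or exactly three blue edges. A solution is an orientation of its edges such that every vertex has at least one incoming blue edge or at least two incoming red edges. *)

theory Defs
  imports Main
begin

definition cubic_graph :: "'a set \<Rightarrow> 'a set set \<Rightarrow> bool" where
  "cubic_graph V E \<longleftrightarrow> finite V \<and>
     (\<forall>e\<in>E. \<exists>u v. u \<noteq> v \<and> u \<in> V \<and> v \<in> V \<and> e = {u, v}) \<and>
     (\<forall>v\<in>V. card {e\<in>E. v \<in> e} = 3)"

text \<open>An NCL instance: a 3-regular graph whose edges are coloured blue (the
  edges in B) or red (the edges in E - B), every vertex being incident to
  exactly one or exactly three blue edges.\<close>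
definition ncl_instance :: "'a set \<Rightarrow> 'a set set \<Rightarrow> 'a set set \<Rightarrow> bool" where
  "ncl_instance V E B \<longleftrightarrow> cubic_graph V E \<and> B \<subseteq> E \<and>
     (\<forall>v\<in>V. card {e\<in>B. v \<in> e} = 1 \<or> card {e\<in>B. v \<in> e} = 3)"

text \<open>An orientation assigns to every edge its head (the endpoint it points to).\<close>
definition orientation :: "'a set set \<Rightarrow> ('a set \<Rightarrow> 'a) \<Rightarrow> bool" where
  "orientation E h \<longleftrightarrow> (\<forall>e\<in>E. h e \<in> e)"

definition ncl_solution :: "'a set \<Rightarrow> 'a set set \<Rightarrow> 'a set set \<Rightarrow> ('a set \<Rightarrow> 'a) \<Rightarrow> bool" where
  "ncl_solution V E B h \<longleftrightarrow> orientation E h \<and>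
     (\<forall>v\<in>V. (\<exists>e\<in>B. h e = v) \<or> card {e\<in>E - B. h e = v} \<ge> 2)"

end

theory Submission
  imports Defs
begin

text \<open>Either reversing a single edge of a solution, or reversing all of its edges, gives another
  solution. Suppose the total reversal fails at a vertex v. Every blue edge at v then points
  into v under the original solution, and at most one edge points out of v, so v has at least two
  incoming edges, one of them blue. An incoming edge other than that blue one is superfluous at v,
  and reversing it only adds an incoming edge at its other endpoint: this single reversal is
  again a solution.\<close>

definition incoming :: "'a set set \<Rightarrow> ('a set \<Rightarrow> 'a) \<Rightarrow> 'a \<Rightarrow> 'a set set" where
  "incoming E h v = {e\<in>E. h e = v}"

definition ncl_satisfied :: "'a set set \<Rightarrow> 'a set set \<Rightarrow> bool" where
  "ncl_satisfied B I \<longleftrightarrow> B \<inter> I \<noteq> {} \<or> 2 \<le> card (I - B)"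

definition reverse :: "('a set \<Rightarrow> 'a) \<Rightarrow> 'a set \<Rightarrow> 'a" where
  "reverse h e = the_elem (e - {h e})"

lemma cubic_graph_edge:
  assumes "cubic_graph V E" "e \<in> E"
  shows "\<exists>u w. u \<noteq> w \<and> u \<in> V \<and> w \<in> V \<and> e = {u, w}"
  using assms unfolding cubic_graph_def by (elim conjE) (rule bspec)

lemma cubic_graph_card_edge:
  assumes "cubic_graph V E" "e \<in> E"
  shows "card e = 2"
  using cubic_graph_edge[OF assms] by auto

lemma cubic_graph_degree:
  assumes "cubic_graph V E" "v \<in> V"
  shows "card {e\<in>E. v \<in> e} = 3"
  using assms unfolding cubic_graph_def by (elim conjE) (rule bspec)

lemma cubic_graph_finite_edges:
  assumes "cubic_graph V E"
  shows "finite E"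
proof (rule finite_subset)
  show "E \<subseteq> Pow V"
    using cubic_graph_edge[OF assms] by blast
  show "finite (Pow V)"
    using assms unfolding cubic_graph_def by simp
qed

lemma reverse_in_edge:
  assumes "card e = 2" "h e \<in> e"
  shows "reverse h e \<in> e" and "reverse h e \<noteq> h e"
    and "x \<in> e \<Longrightarrow> x = reverse h e \<longleftrightarrow> x \<noteq> h e"
proof -
  have "card (e - {h e}) = 1"
    using assms card_ge_0_finite[of e] by (simp add: card_Diff_singleton)
  then obtain y where "e - {h e} = {y}"
    by (rule card_1_singletonE)
  then have "e - {h e} = {reverse h e}"
    by (simp add: reverse_def)
  then show "reverse h e \<in> e" "reverse h e \<noteq> h e" "x \<in> e \<Longrightarrow> x = reverse h e \<longleftrightarrow> x \<noteq> h e"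
    by blast+
qed

lemma orientation_reverse:
  assumes "orientation E h" "\<forall>e\<in>E. card e = 2"
  shows "orientation E (reverse h)"
  using assms by (simp add: orientation_def reverse_in_edge(1))

lemma orientation_reverse_edge:
  assumes "orientation E h" "\<forall>e\<in>E. card e = 2"
  shows "orientation E (h(e := reverse h e))"
  using assms by (simp add: orientation_def reverse_in_edge(1))

lemma incoming_subset:
  assumes "orientation E h"
  shows "incoming E h v \<subseteq> {e\<in>E. v \<in> e}"
  using assms unfolding orientation_def incoming_def by auto

lemma incoming_reverse:
  assumes "orientation E h" "\<forall>e\<in>E. card e = 2"
  shows "incoming E (reverse h) v = {e\<in>E. v \<in> e} - incoming E h v"
proof (rule set_eqI)
  fix e
  show "e \<in> incoming E (reverse h) v \<longleftrightarrow> e \<in> {e\<in>E. v \<in> e} - incoming E h v"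
  proof (cases "e \<in> E")
    case True
    then have "card e = 2" "h e \<in> e"
      using assms unfolding orientation_def by auto
    then show ?thesis
      using reverse_in_edge(1,2)[of e h] reverse_in_edge(3)[of e h v] by (auto simp: incoming_def)
  qed (simp add: incoming_def)
qed

lemma ncl_solution_iff_satisfied:
  assumes "B \<subseteq> E"
  shows "ncl_solution V E B h \<longleftrightarrow> orientation E h \<and> (\<forall>v\<in>V. ncl_satisfied B (incoming E h v))"
proof -
  have "(\<exists>e\<in>B. h e = v) \<longleftrightarrow> B \<inter> incoming E h v \<noteq> {}" for v
    using assms unfolding incoming_def by auto
  moreover have "{e\<in>E - B. h e = v} = incoming E h v - B" for v
    unfolding incoming_def by auto
  ultimately show ?thesis
    unfolding ncl_solution_def ncl_satisfied_def by simp
qed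

lemma ncl_satisfied_mono:
  assumes "ncl_satisfied B I" "I \<subseteq> J" "finite J"
  shows "ncl_satisfied B J"
proof -
  have "card (I - B) \<le> card (J - B)"
    using assms(2,3) by (intro card_mono) auto
  then show ?thesis
    using assms(1,2) unfolding ncl_satisfied_def by auto
qed

lemma superfluous_incoming_edge:
  assumes "3 \<le> card N" "N \<inter> B \<noteq> {}" "I \<subseteq> N" "\<not> ncl_satisfied B (N - I)"
  shows "\<exists>e\<in>I. ncl_satisfied B (I - {e})"
proof -
  have "finite N"
    using assms(1) card.infinite by fastforce
  have no_blue_out: "B \<inter> (N - I) = {}" and "card (N - I - B) < 2"
    using assms(4) unfolding ncl_satisfied_def by auto
  moreover have "N - I - B = N - I"
    using no_blue_out by blast
  ultimately have "card (N - I) \<le> 1"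
    by simp
  then have "2 \<le> card I"
    using assms(1,3) \<open>finite N\<close> card_Diff_subset[of I N] finite_subset[of I N] by linarith
  obtain b where b: "b \<in> N \<inter> B"
    using assms(2) by blast
  with no_blue_out have "b \<in> I"
    by blast
  have "\<not> I \<subseteq> {b}"
    using \<open>2 \<le> card I\<close> card_mono[of "{b}" I] by auto
  then obtain e where "e \<in> I" "e \<noteq> b"
    by blast
  then have "ncl_satisfied B (I - {e})"
    using b \<open>b \<in> I\<close> unfolding ncl_satisfied_def by blast
  with \<open>e \<in> I\<close> show ?thesis ..
qed

lemma ncl_solution_reverse_edge:
  assumes "cubic_graph V E" "B \<subseteq> E" "ncl_solution V E B h" "e \<in> E"
    and superfluous: "ncl_satisfied B (incoming E h (h e) - {e})"
  shows "ncl_solution V E B (h(e := reverse h e))"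
proof -
  let ?h' = "h(e := reverse h e)"
  have two: "\<forall>e\<in>E. card e = 2"
    using cubic_graph_card_edge[OF assms(1)] by blast
  have ori: "orientation E h" and sat: "\<forall>v\<in>V. ncl_satisfied B (incoming E h v)"
    using assms(3) ncl_solution_iff_satisfied[OF assms(2)] by blast+
  have fin: "finite (incoming E ?h' w)" for w
    using cubic_graph_finite_edges[OF assms(1)] unfolding incoming_def by simp
  have sub: "incoming E h w - {e} \<subseteq> incoming E ?h' w" for w
    unfolding incoming_def by auto
  have "ncl_satisfied B (incoming E ?h' w)" if "w \<in> V" for w
  proof (cases "w = h e")
    case True
    show ?thesis
      using ncl_satisfied_mono[OF superfluous sub fin] unfolding True .
  next
    case False
    then have "incoming E h w - {e} = incoming E h w"
      unfolding incoming_def by auto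
    then show ?thesis
      using ncl_satisfied_mono[OF _ sub[of w] fin] sat \<open>w \<in> V\<close> by simp
  qed
  moreover have "orientation E ?h'"
    using orientation_reverse_edge[OF ori two] .
  ultimately show ?thesis
    using ncl_solution_iff_satisfied[OF assms(2)] by blast
qed

lemma ncl_solution_reverse_edge_or_reverse:
  assumes "cubic_graph V E" "B \<subseteq> E" "\<forall>v\<in>V. \<exists>e\<in>B. v \<in> e" "ncl_solution V E B h"
  shows "(\<exists>e\<in>E. ncl_solution V E B (h(e := reverse h e))) \<or> ncl_solution V E B (reverse h)"
proof (rule disjCI)
  assume not_solution: "\<not> ncl_solution V E B (reverse h)"
  have two: "\<forall>e\<in>E. card e = 2"
    using cubic_graph_card_edge[OF assms(1)] by blast
  have ori: "orientation E h"
    using assms(4) ncl_solution_iff_satisfied[OF assms(2)] by blast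
  have "orientation E (reverse h)"
    using orientation_reverse[OF ori two] .
  with not_solution obtain v where "v \<in> V"
    and fails: "\<not> ncl_satisfied B (incoming E (reverse h) v)"
    unfolding ncl_solution_iff_satisfied[OF assms(2)] by blast
  let ?N = "{e\<in>E. v \<in> e}"
  let ?I = "incoming E h v"
  have degree: "3 \<le> card ?N"
    using cubic_graph_degree[OF assms(1) \<open>v \<in> V\<close>] by simp
  have blue: "?N \<inter> B \<noteq> {}"
    using assms(2,3) \<open>v \<in> V\<close> by blast
  have "\<not> ncl_satisfied B (?N - ?I)"
    using fails unfolding incoming_reverse[OF ori two] .
  then obtain e where "e \<in> ?I" "ncl_satisfied B (?I - {e})"
    using superfluous_incoming_edge[OF degree blue incoming_subset[OF ori]] by blast
  then have "e \<in> E" "ncl_satisfied B (incoming E h (h e) - {e})"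
    unfolding incoming_def by auto
  then show "\<exists>e\<in>E. ncl_solution V E B (h(e := reverse h e))"
    using ncl_solution_reverse_edge[OF assms(1,2,4)] by blast
qed

lemma ncl_instance_blue_edge:
  assumes "ncl_instance V E B" "v \<in> V"
  shows "\<exists>e\<in>B. v \<in> e"
proof -
  have "card {e\<in>B. v \<in> e} \<noteq> 0"
    using assms unfolding ncl_instance_def by auto
  then have "{e\<in>B. v \<in> e} \<noteq> {}"
    by (metis card.empty)
  then show ?thesis
    by blast
qed

theorem mainTheorem18:
  fixes V :: "'a set" and E B :: "'a set set" and h :: "'a set \<Rightarrow> 'a"
  assumes "ncl_instance V E B"
    and "V \<noteq> {}"
    and "ncl_solution V E B h"
  shows "\<exists>h'. ncl_solution V E B h' \<and> (\<exists>e\<in>E. h' e \<noteq> h e)"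
proof -
  have cubic: "cubic_graph V E" and "B \<subseteq> E"
    using assms(1) unfolding ncl_instance_def by blast+
  have blue: "\<forall>v\<in>V. \<exists>e\<in>B. v \<in> e"
    using ncl_instance_blue_edge[OF assms(1)] by blast
  have ori: "orientation E h"
    using assms(3) unfolding ncl_solution_def by blast
  have differs: "reverse h e \<noteq> h e" if "e \<in> E" for e
  proof (rule reverse_in_edge(2))
    show "card e = 2"
      using cubic_graph_card_edge[OF cubic that] .
    show "h e \<in> e"
      using ori that unfolding orientation_def by blast
  qed
  obtain e where "e \<in> E"
    using blue \<open>B \<subseteq> E\<close> assms(2) by blast
  show ?thesis
    using ncl_solution_reverse_edge_or_reverse[OF cubic \<open>B \<subseteq> E\<close> blue assms(3)]
  proof
    assume "\<exists>e\<in>E. ncl_solution V E B (h(e := reverse h e))"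
    then show ?thesis
      using differs by fastforce
  next
    assume "ncl_solution V E B (reverse h)"
    then show ?thesis
      using differs \<open>e \<in> E\<close> by blast
  qed
qed

end
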